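(* Let $G$ be a finite abstract simplicial complex with connection matrix $L$ and $g=L^{-1}$. Then for all $x,y\in G$, $$g(x,y)=\omega(x)\,\omega(y)\,\chi\big(W^+(x)\cap W^+(y)\big).$$
   Context: A finite abstract simplicial complex $G$ is a finite set of non-empty finite sets closed under taking non-empty subsets; its elements are simplices. For $x\in G$, $\omega(x)=(-1)^{|x|-1}$. The connection matrix $L$ has $L(x,y)=1$ if $x\cap y\neq\emptyset$ and $0$ otherwise. The star of $x$ is $W^+(x)=\{y\in G: x\subseteq y\}$. For any subset $A\subseteq G$ (not necessarily a complex), $\chi(A)=\sum_{y\in A}\omega(y)$. *)

theory Defs
  imports Complex_Main
begin

definition simplicial_complex :: "'a set set \<Rightarrow> bool" where
  "simplicial_complex G \<longleftrightarrow> finite G \<and> (\<forall>x\<in>G. x \<noteq> {} \<and> finite x) \<and>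
     (\<forall>x\<in>G. \<forall>y. y \<noteq> {} \<and> y \<subseteq> x \<longrightarrow> y \<in> G)"

definition omega :: "'a set \<Rightarrow> real" where
  "omega x = (-1) ^ (card x - 1)"

definition chi :: "'a set set \<Rightarrow> real" where
  "chi A = (\<Sum>y\<in>A. omega y)"

definition star :: "'a set set \<Rightarrow> 'a set \<Rightarrow> 'a set set" where
  "star G x = {y\<in>G. x \<subseteq> y}"

definition connection :: "'a set \<Rightarrow> 'a set \<Rightarrow> real" where
  "connection x y = (if x \<inter> y \<noteq> {} then 1 else 0)"

text \<open>Matrices indexed by a finite index set I, as functions I \<times> I \<to> real.\<close>
definition is_inverse_on :: "'i set \<Rightarrow> ('i \<Rightarrow> 'i \<Rightarrow> real) \<Rightarrow> ('i \<Rightarrow> 'i \<Rightarrow> real) \<Rightarrow> bool" where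
  "is_inverse_on I A B \<longleftrightarrow>
     (\<forall>x\<in>I. \<forall>y\<in>I. (\<Sum>z\<in>I. A x z * B z y) = (if x = y then 1 else 0)) \<and>
     (\<forall>x\<in>I. \<forall>y\<in>I. (\<Sum>z\<in>I. B x z * A z y) = (if x = y then 1 else 0))"

text \<open>The inverse matrix (entries outside I set to 0 to make it unique).\<close>
definition mat_inv_on :: "'i set \<Rightarrow> ('i \<Rightarrow> 'i \<Rightarrow> real) \<Rightarrow> ('i \<Rightarrow> 'i \<Rightarrow> real)" where
  "mat_inv_on I A = (THE B. is_inverse_on I A B \<and> (\<forall>x y. x \<notin> I \<or> y \<notin> I \<longrightarrow> B x y = 0))"

end

theory Submission
  imports Defs
begin

(* Write g(z,y) as a sum of omega(z) omega(y) omega(w) over the simplices w containing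
   both z and y. Exchanging the sums, (L g)(x,y) is the sum over w containing y of
   omega(y) omega(w) times the sum of L(x,z) omega(z) over the faces z of w. That inner sum
   is the Euler characteristic of the full simplex on w minus that of its face on w - x,
   i.e. 1 if w is contained in x and 0 otherwise. What remains is an alternating sum over
   the Boolean interval between y and x, which vanishes unless x = y. Since L and g are
   symmetric, g is a two-sided inverse of L, and inverses are unique. *)

lemma sum_neg_one_power_interval:
  assumes "finite S" "U \<subseteq> S"
  shows "(\<Sum>T | U \<subseteq> T \<and> T \<subseteq> S. (-1::real) ^ card T) = (if U = S then (-1) ^ card S else 0)"
proof (cases "U = S")
  case True
  then have "{T. U \<subseteq> T \<and> T \<subseteq> S} = {S}" by auto
  with True show ?thesis by simp
next
  case False
  with assms have "U \<subset> S" by auto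
  have reorder: "{T \<in> {T. U \<subseteq> T \<and> T \<subseteq> S}. P T} = {T. T \<subseteq> S \<and> U \<subseteq> T \<and> P T}" for P
    by blast
  from card_subsupersets_even_odd[OF assms(1) \<open>U \<subset> S\<close>]
  have "card {T \<in> {T. U \<subseteq> T \<and> T \<subseteq> S}. even (card T)}
      = card {T \<in> {T. U \<subseteq> T \<and> T \<subseteq> S}. odd (card T)}"
    by (simp only: reorder)
  from sum_alternating_cancels[OF _ this] assms(1) False show ?thesis by simp
qed

lemma omega_eq_neg_one_power:
  assumes "finite z" "z \<noteq> {}"
  shows "omega z = - ((-1) ^ card z)"
proof -
  from assms have "card z \<noteq> 0" by simp
  then obtain n where "card z = Suc n" using not0_implies_Suc by blast
  then show ?thesis by (simp add: omega_def)
qed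

lemma omega_mult_self: "omega x * omega x = 1"
  by (simp add: omega_def flip: power_add)

lemma sum_omega_interval:
  assumes "finite x" "y \<noteq> {}"
  shows "(\<Sum>w | y \<subseteq> w \<and> w \<subseteq> x. omega y * omega w) = (if x = y then 1 else 0)"
proof (cases "y \<subseteq> x")
  case True
  have "omega w = - ((-1) ^ card w)" if "y \<subseteq> w" "w \<subseteq> x" for w
    using that assms by (intro omega_eq_neg_one_power) (auto intro: finite_subset)
  then have "(\<Sum>w | y \<subseteq> w \<and> w \<subseteq> x. omega y * omega w)
           = - omega y * (\<Sum>w | y \<subseteq> w \<and> w \<subseteq> x. (-1) ^ card w)"
    by (simp add: sum_distrib_left sum_negf)
  also have "\<dots> = (if x = y then - omega y * (-1) ^ card y else 0)"
    using sum_neg_one_power_interval[OF assms(1) True] by simp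
  also have "\<dots> = (if x = y then 1 else 0)"
    using omega_eq_neg_one_power[OF finite_subset[OF True assms(1)] assms(2)] omega_mult_self[of y]
    by simp
  finally show ?thesis .
next
  case False
  then have "{w. y \<subseteq> w \<and> w \<subseteq> x} = {}" "x \<noteq> y" by blast+
  then show ?thesis by (simp only: sum.empty if_False)
qed

lemma sum_omega_simplex:
  assumes "finite S"
  shows "(\<Sum>z\<in>Pow S - {{}}. omega z) = (if S = {} then 0 else 1)"
proof -
  have "(\<Sum>z\<in>Pow S. (-1::real) ^ card z) = (if S = {} then 1 else 0)"
    using sum_neg_one_power_interval[OF assms, of "{}"] by (simp add: Pow_def)
  moreover have "(\<Sum>z\<in>Pow S. (-1::real) ^ card z) = 1 + (\<Sum>z\<in>Pow S - {{}}. (-1) ^ card z)"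
    using assms by (subst sum.remove[of _ "{}"]) auto
  moreover have "(\<Sum>z\<in>Pow S - {{}}. omega z) = - (\<Sum>z\<in>Pow S - {{}}. (-1) ^ card z)"
    using assms by (auto simp flip: sum_negf intro!: sum.cong omega_eq_neg_one_power
        intro: finite_subset)
  ultimately have "(\<Sum>z\<in>Pow S - {{}}. omega z) = 1 - (if S = {} then 1 else 0)"
    by linarith
  then show ?thesis by simp
qed

lemma sum_connection_omega_simplex:
  assumes "finite w" "w \<noteq> {}"
  shows "(\<Sum>z\<in>Pow w - {{}}. connection x z * omega z) = (if w \<subseteq> x then 1 else 0)"
proof -
  have disjoint_faces: "{z \<in> Pow w - {{}}. z \<inter> x = {}} = Pow (w - x) - {{}}" by auto
  have "(\<Sum>z\<in>Pow w - {{}}. connection x z * omega z)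
      = (\<Sum>z\<in>Pow w - {{}}. omega z) - (\<Sum>z\<in>Pow w - {{}}. if z \<inter> x = {} then omega z else 0)"
    unfolding sum_subtractf[symmetric] by (intro sum.cong) (auto simp: connection_def)
  also have "\<dots> = (\<Sum>z\<in>Pow w - {{}}. omega z) - (\<Sum>z\<in>Pow (w - x) - {{}}. omega z)"
    using assms by (simp flip: disjoint_faces sum.inter_filter)
  also have "\<dots> = (if w \<subseteq> x then 1 else 0)"
    using assms by (simp add: sum_omega_simplex)
  finally show ?thesis .
qed

lemma mat_inv_on_eqI:
  assumes "finite I" "is_inverse_on I A B" "\<And>x y. x \<notin> I \<or> y \<notin> I \<Longrightarrow> B x y = 0"
  shows "mat_inv_on I A = B"
  unfolding mat_inv_on_def
proof (rule the_equality)
  show "is_inverse_on I A B \<and> (\<forall>x y. x \<notin> I \<or> y \<notin> I \<longrightarrow> B x y = 0)"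
    using assms by blast
next
  fix C assume C: "is_inverse_on I A C \<and> (\<forall>x y. x \<notin> I \<or> y \<notin> I \<longrightarrow> C x y = 0)"
  show "C = B"
  proof (intro ext)
    fix x y
    show "C x y = B x y"
    proof (cases "x \<in> I \<and> y \<in> I")
      case True
      have AB: "(\<Sum>u\<in>I. A z u * B u y) = (if z = y then 1 else 0)" if "z \<in> I" for z
        using assms(2) True that unfolding is_inverse_on_def by blast
      have CA: "(\<Sum>z\<in>I. C x z * A z u) = (if x = u then 1 else 0)" if "u \<in> I" for u
        using C True that unfolding is_inverse_on_def by blast
      have "C x y = (\<Sum>z\<in>I. C x z * (if z = y then 1 else 0))"
        using True assms(1) by (simp add: if_distrib[of "\<lambda>a. _ * a"] cong: if_cong)
      also have "\<dots> = (\<Sum>z\<in>I. C x z * (\<Sum>u\<in>I. A z u * B u y))"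
        using AB by simp
      also have "\<dots> = (\<Sum>u\<in>I. (\<Sum>z\<in>I. C x z * A z u) * B u y)"
        unfolding sum_distrib_left sum_distrib_right mult.assoc by (rule sum.swap)
      also have "\<dots> = (\<Sum>u\<in>I. (if x = u then 1 else 0) * B u y)"
        using CA by simp
      also have "\<dots> = B x y"
        using True assms(1) by (simp add: if_distrib[of "\<lambda>a. a * _"] cong: if_cong)
      finally show ?thesis .
    qed (use C assms(3) in auto)
  qed
qed

lemma is_inverse_on_symmetric:
  assumes "\<And>x y. x \<in> I \<Longrightarrow> y \<in> I \<Longrightarrow> A x y = A y x"
    and "\<And>x y. x \<in> I \<Longrightarrow> y \<in> I \<Longrightarrow> B x y = B y x"
    and left: "\<And>x y. x \<in> I \<Longrightarrow> y \<in> I \<Longrightarrow> (\<Sum>z\<in>I. A x z * B z y) = (if x = y then 1 else 0)"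
  shows "is_inverse_on I A B"
proof -
  have "(\<Sum>z\<in>I. B x z * A z y) = (if x = y then 1 else 0)" if "x \<in> I" "y \<in> I" for x y
  proof -
    have "(\<Sum>z\<in>I. B x z * A z y) = (\<Sum>z\<in>I. A y z * B z x)"
      using that assms(1,2) by (intro sum.cong) (auto simp: mult.commute)
    with left[OF that(2,1)] show ?thesis by auto
  qed
  with left show ?thesis unfolding is_inverse_on_def by blast
qed

lemma simplicial_complex_finite: "simplicial_complex G \<Longrightarrow> finite G"
  by (simp add: simplicial_complex_def)

lemma simplicial_complex_simplex:
  "simplicial_complex G \<Longrightarrow> x \<in> G \<Longrightarrow> finite x \<and> x \<noteq> {}"
  by (simp add: simplicial_complex_def)

lemma simplicial_complex_subset:
  "simplicial_complex G \<Longrightarrow> x \<in> G \<Longrightarrow> y \<subseteq> x \<Longrightarrow> y \<noteq> {} \<Longrightarrow> y \<in> G"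
  unfolding simplicial_complex_def by blast

lemma simplicial_complex_faces:
  assumes "simplicial_complex G" "w \<in> G"
  shows "{z \<in> G. z \<subseteq> w} = Pow w - {{}}"
  using simplicial_complex_subset[OF assms] simplicial_complex_simplex[OF assms(1)] by auto

definition green :: "'a set set \<Rightarrow> 'a set \<Rightarrow> 'a set \<Rightarrow> real" where
  "green G x y =
     (if x \<in> G \<and> y \<in> G then omega x * omega y * chi (star G x \<inter> star G y) else 0)"

lemma green_symmetric: "green G x y = green G y x"
  unfolding green_def by (simp add: Int_commute mult.commute conj_commute)

lemma connection_symmetric: "connection x y = connection y x"
  by (simp add: connection_def Int_commute)

lemma connection_green_left_inverse:
  assumes G: "simplicial_complex G" and "x \<in> G" "y \<in> G"
  shows "(\<Sum>z\<in>G. connection x z * green G z y) = (if x = y then 1 else 0)"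
proof -
  have fin: "finite G" "finite (star G y)"
    using simplicial_complex_finite[OF G] by (auto simp: star_def)
  have "green G z y = (\<Sum>w | w \<in> star G y \<and> z \<subseteq> w. omega z * (omega y * omega w))"
    if "z \<in> G" for z
  proof -
    have "star G z \<inter> star G y = {w. w \<in> star G y \<and> z \<subseteq> w}" by (auto simp: star_def)
    with that \<open>y \<in> G\<close> show ?thesis
      by (simp add: green_def chi_def sum_distrib_left mult.assoc)
  qed
  then have "(\<Sum>z\<in>G. connection x z * green G z y)
      = (\<Sum>z\<in>G. \<Sum>w | w \<in> star G y \<and> z \<subseteq> w. connection x z * omega z * (omega y * omega w))"
    by (simp add: sum_distrib_left mult.assoc)
  also have "\<dots> = (\<Sum>w\<in>star G y. \<Sum>z | z \<in> G \<and> z \<subseteq> w. connection x z * omega z * (omega y * omega w))"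
    by (rule sum.swap_restrict[OF fin])
  also have "\<dots> = (\<Sum>w\<in>star G y. (\<Sum>z\<in>Pow w - {{}}. connection x z * omega z) * (omega y * omega w))"
    using simplicial_complex_faces[OF G] by (simp add: star_def sum_distrib_right)
  also have "\<dots> = (\<Sum>w\<in>star G y. if w \<subseteq> x then omega y * omega w else 0)"
    using simplicial_complex_simplex[OF G] by (intro sum.cong) (auto simp: star_def sum_connection_omega_simplex)
  also have "\<dots> = (\<Sum>w | y \<subseteq> w \<and> w \<subseteq> x. omega y * omega w)"
  proof -
    have "{w \<in> star G y. w \<subseteq> x} = {w. y \<subseteq> w \<and> w \<subseteq> x}"
      using assms simplicial_complex_subset[OF G \<open>x \<in> G\<close>] simplicial_complex_simplex[OF G]
      by (auto simp: star_def)
    with fin show ?thesis by (simp flip: sum.inter_filter)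
  qed
  also have "\<dots> = (if x = y then 1 else 0)"
    using assms simplicial_complex_simplex[OF G] by (simp add: sum_omega_interval)
  finally show ?thesis .
qed

theorem theorem4:
  fixes G :: "'a set set"
  assumes "simplicial_complex G"
  shows "is_inverse_on G connection (mat_inv_on G connection) \<and>
         (\<forall>x\<in>G. \<forall>y\<in>G. mat_inv_on G connection x y
            = omega x * omega y * chi (star G x \<inter> star G y))"
proof -
  have inverse: "is_inverse_on G connection (green G)"
    using connection_green_left_inverse[OF assms]
    by (intro is_inverse_on_symmetric connection_symmetric green_symmetric)
  then have "mat_inv_on G connection = green G"
    using simplicial_complex_finite[OF assms] by (intro mat_inv_on_eqI) (auto simp: green_def)
  with inverse show ?thesis by (simp add: green_def)
qed

end
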